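(* Let $f\in\mathcal{C}$ and $f^\ast(t):=tf(1/t)$, $t>0$, with $f^\ast(0):=\lim_{t\downarrow0}f^\ast(t)$. For all probability measures $P,Q$: (1) for $w\in(0,\frac12]$, $$D_f(P\|Q)\ge f^\ast\!\Bigl(1+\frac{\mathcal{I}_w(P\|Q)}{1-w}\Bigr)+f^\ast\!\Bigl(\frac{w-\mathcal{I}_w(P\|Q)}{1-w}\Bigr)-f^\ast\!\Bigl(\frac{w}{1-w}\Bigr);$$ (2) for $w\in(\frac12,1)$, $$D_f(P\|Q)\ge f^\ast\!\Bigl(1+\frac{\mathcal{I}_w(Q\|P)}{w}\Bigr)+f^\ast\!\Bigl(\frac{1-w-\mathcal{I}_w(Q\|P)}{w}\Bigr)-f^\ast\!\Bigl(\frac{1-w}{w}\Bigr).$$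
   Context: $\mathcal{C}$ is the set of convex $f\colon(0,\infty)\to\mathbb{R}$ with $f(1)=0$. For densities $p,q$ w.r.t. a dominating measure $\mu$, $D_f(P\|Q):=\int qf(p/q)\,\mathrm{d}\mu$ with conventions $f(0):=\lim_{t\downarrow0}f(t)$, $0f(0/0)=0$, $0f(a/0)=a\lim_{u\to\infty}f(u)/u$. DeGroot statistical information: $\mathcal{I}_\omega(P\|Q):=D_{\phi_\omega}(P\|Q)$ with $\phi_\omega(t)=\min\{\omega,1-\omega\}-\min\{\omega t,1-\omega\}$, $\omega\in(0,1)$. *)

theory Defs
  imports "HOL-Analysis.Analysis"
begin

definition f_at_zero :: "(real \<Rightarrow> real) \<Rightarrow> ereal" where
  "f_at_zero f = Lim (at_right 0) (\<lambda>t. ereal (f t))"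

definition f_slope_inf :: "(real \<Rightarrow> real) \<Rightarrow> ereal" where
  "f_slope_inf f = Lim at_top (\<lambda>u. ereal (f u / u))"

text \<open>Pointwise integrand q f(p/q) with the conventions
  f(0) := lim f(t), 0 f(0/0) = 0, 0 f(a/0) = a lim f(u)/u.\<close>
definition fdiv_integrand :: "(real \<Rightarrow> real) \<Rightarrow> real \<Rightarrow> real \<Rightarrow> ereal" where
  "fdiv_integrand f a b =
     (if b > 0 then (if a > 0 then ereal (b * f (a / b)) else ereal b * f_at_zero f)
      else (if a > 0 then ereal a * f_slope_inf f else 0))"

text \<open>D_f(P||Q) = integral of q f(p/q) d mu, for densities p, q w.r.t. mu;
  the Lebesgue integral of an extended-real function written as positive part minus negative part.\<close>
definition f_div :: "(real \<Rightarrow> real) \<Rightarrow> 'a measure \<Rightarrow> ('a \<Rightarrow> real) \<Rightarrow> ('a \<Rightarrow> real) \<Rightarrow> ereal" where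
  "f_div f \<mu> p q =
     enn2ereal (\<integral>\<^sup>+ x. e2ennreal (max 0 (fdiv_integrand f (p x) (q x))) \<partial>\<mu>)
   - enn2ereal (\<integral>\<^sup>+ x. e2ennreal (max 0 (- fdiv_integrand f (p x) (q x))) \<partial>\<mu>)"

definition phi_DG :: "real \<Rightarrow> real \<Rightarrow> real" where
  "phi_DG \<omega> t = min \<omega> (1 - \<omega>) - min (\<omega> * t) (1 - \<omega>)"

text \<open>DeGroot statistical information (always finite, so taken as a real number).\<close>
definition DeGroot_info :: "real \<Rightarrow> 'a measure \<Rightarrow> ('a \<Rightarrow> real) \<Rightarrow> ('a \<Rightarrow> real) \<Rightarrow> real" where
  "DeGroot_info \<omega> \<mu> p q = real_of_ereal (f_div (phi_DG \<omega>) \<mu> p q)"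

definition fstar :: "(real \<Rightarrow> real) \<Rightarrow> real \<Rightarrow> ereal" where
  "fstar f t = (if t > 0 then ereal (t * f (1 / t))
                else Lim (at_right 0) (\<lambda>s. ereal (s * f (1 / s))))"

definition is_prob_density :: "'a measure \<Rightarrow> ('a \<Rightarrow> real) \<Rightarrow> bool" where
  "is_prob_density \<mu> p \<longleftrightarrow> p \<in> borel_measurable \<mu> \<and> (\<forall>x\<in>space \<mu>. 0 \<le> p x)
      \<and> (\<integral>\<^sup>+ x. ennreal (p x) \<partial>\<mu>) = 1"

end

theory Submission imports Defs begin

text \<open>The function \<open>g(t) = f\<^sup>*(t) = t f(1/t)\<close> is convex and \<open>D\<^sub>f(P\<parallel>Q) = \<integral> p g(q/p)\<close>. Fix \<open>a > 0\<close>
  and let \<open>m = \<integral> min(q, a p)\<close>, so that \<open>\<integral> p min(q/p, a) = m\<close> and \<open>\<integral> p max(q/p, a) = 1 + a - m\<close>.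
  Since \<open>g(min(r, a)) + g(max(r, a)) = g(r) + g(a)\<close>, bounding the first term by a supporting line
  of \<open>g\<close> at \<open>m\<close> and the second by one at \<open>1 + a - m\<close> and integrating against \<open>p\<close> gives
  \<open>D\<^sub>f(P\<parallel>Q) \<ge> g(1 + a - m) + g(m) - g(a)\<close>; the same two lines control the singular parts through
  \<open>f(0)\<close> and \<open>f\<^sup>*(0)\<close>. The DeGroot information is \<open>min(w, 1 - w) - \<integral> min(w p, (1 - w) q)\<close>, so
  both claims are this bound with \<open>a = w/(1 - w)\<close>, respectively \<open>a = (1 - w)/w\<close>.\<close>

definition fstar_real :: "(real \<Rightarrow> real) \<Rightarrow> real \<Rightarrow> real" where
  "fstar_real f t = t * f (1 / t)"

lemma fstar_eq_fstar_real: "0 < t \<Longrightarrow> fstar f t = ereal (fstar_real f t)"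
  by (simp add: fstar_def fstar_real_def)

lemma convex_on_fstar_real:
  assumes cf: "convex_on {0<..} f"
  shows "convex_on {0<..} (fstar_real f)"
proof (rule convex_onI)
  fix t x y :: real
  assume t: "0 < t" "t < 1" and "x \<in> {0<..}" "y \<in> {0<..}"
  then have x: "x > 0" and y: "y > 0" by auto
  define z where "z = (1 - t) * x + t * y"
  have z: "z > 0" unfolding z_def using t x y by (simp add: add_pos_pos)
  define l where "l = t * y / z"
  have l: "0 \<le> l" "l \<le> 1" unfolding l_def using t x y z by (auto simp: divide_simps z_def)
  have zl: "z * (1 - l) = (1 - t) * x" "z * l = t * y"
    using z by (simp_all add: l_def field_simps z_def)
  have "(1 - l) / x = (1 - t) / z" "l / y = t / z"
    using x y z zl by (simp_all add: field_simps)
  then have "1 / z = (1 - l) *\<^sub>R (1 / x) + l *\<^sub>R (1 / y)"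
    using z by (simp add: add_divide_distrib[symmetric])
  then have "f (1 / z) \<le> (1 - l) * f (1 / x) + l * f (1 / y)"
    using convex_onD[OF cf l, of "1 / x" "1 / y"] x y by simp
  then have "z * f (1 / z) \<le> (z * (1 - l)) * f (1 / x) + (z * l) * f (1 / y)"
    using z mult_left_mono[of _ _ z] by (fastforce simp: algebra_simps)
  then show "fstar_real f ((1 - t) *\<^sub>R x + t *\<^sub>R y)
      \<le> (1 - t) * fstar_real f x + t * fstar_real f y"
    unfolding zl by (simp add: fstar_real_def z_def)
qed (rule convex_real_interval)

lemma convex_on_supporting_line:
  fixes g :: "real \<Rightarrow> real"
  assumes "convex_on {0<..} g" and "0 < z"
  obtains c where "\<And>y. 0 < y \<Longrightarrow> g z + c * (y - z) \<le> g y"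
  by (rule that[of "Inf ((\<lambda>t. (g z - g t) / (z - t)) ` ({z<..} \<inter> {0<..}))"])
    (use convex_le_Inf_differential[OF assms(1), of z] assms(2) in \<open>simp add: interior_open\<close>)

lemma convex_on_slope_mono:
  fixes g :: "real \<Rightarrow> real"
  assumes g: "convex_on {0<..} g" and "0 < x" "x < y" "y \<le> v" "x \<le> u" "u < v"
  shows "(g y - g x) / (y - x) \<le> (g v - g u) / (v - u)"
proof -
  have swap: "(g a - g b) / (a - b) = (g b - g a) / (b - a)" for a b
    by (metis minus_diff_eq minus_divide_divide)
  have "(g y - g x) / (y - x) \<le> (g v - g x) / (v - x)"
    using convex_on_slope_le(1)[OF g, of x v y] assms by (cases "y = v") (auto simp: swap)
  also have "\<dots> \<le> (g v - g u) / (v - u)"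
    using convex_on_slope_le(2)[OF g, of x v u] assms by (cases "x = u") (auto simp: swap)
  finally show ?thesis .
qed

lemma mono_tendsto_at_right_0:
  fixes h :: "real \<Rightarrow> 'b::{complete_linorder,linorder_topology}"
  assumes "0 < d" and mono: "\<And>s t. 0 < s \<Longrightarrow> s \<le> t \<Longrightarrow> t < d \<Longrightarrow> h s \<le> h t"
  shows "(h \<longlongrightarrow> Inf (h ` {0<..<d})) (at_right 0)"
proof (rule order_tendstoI)
  fix y assume y: "y < Inf (h ` {0<..<d})"
  show "eventually (\<lambda>t. y < h t) (at_right 0)"
    using eventually_at_right_real[OF \<open>0 < d\<close>]
    by eventually_elim (rule less_le_trans[OF y INF_lower], simp)
next
  fix y assume "Inf (h ` {0<..<d}) < y"
  then obtain t0 where t0: "0 < t0" "t0 < d" "h t0 < y" by (auto simp: Inf_less_iff)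
  show "eventually (\<lambda>t. h t < y) (at_right 0)"
    using eventually_at_right_real[OF \<open>0 < t0\<close>]
    by eventually_elim (rule le_less_trans[OF mono t0(3)], use t0 in auto)
qed

lemma antimono_tendsto_at_right_0:
  fixes h :: "real \<Rightarrow> 'b::{complete_linorder,linorder_topology}"
  assumes "0 < d" and antimono: "\<And>s t. 0 < s \<Longrightarrow> s \<le> t \<Longrightarrow> t < d \<Longrightarrow> h t \<le> h s"
  shows "(h \<longlongrightarrow> Sup (h ` {0<..<d})) (at_right 0)"
proof (rule order_tendstoI)
  fix y assume "y < Sup (h ` {0<..<d})"
  then obtain t0 where t0: "0 < t0" "t0 < d" "y < h t0" by (auto simp: less_Sup_iff)
  show "eventually (\<lambda>t. y < h t) (at_right 0)"
    using eventually_at_right_real[OF \<open>0 < t0\<close>]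
    by eventually_elim (rule less_le_trans[OF t0(3) antimono], use t0 in auto)
next
  fix y assume y: "Sup (h ` {0<..<d}) < y"
  show "eventually (\<lambda>t. h t < y) (at_right 0)"
    using eventually_at_right_real[OF \<open>0 < d\<close>]
    by eventually_elim (rule le_less_trans[OF SUP_upper y], simp)
qed

text \<open>A convex function on \<open>(0, \<infinity>)\<close> is either nonincreasing near 0 or, having one
  increasing chord, nondecreasing everywhere; either way it has a limit at \<open>0+\<close>.\<close>

lemma convex_on_tendsto_at_right_0:
  fixes g :: "real \<Rightarrow> real"
  assumes g: "convex_on {0<..} g"
  obtains L where "((\<lambda>t. ereal (g t)) \<longlongrightarrow> L) (at_right 0)"
proof (cases "\<exists>d>0. \<forall>s t. 0 < s \<longrightarrow> s \<le> t \<longrightarrow> t < d \<longrightarrow> g t \<le> g s")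
  case True
  then obtain d where "d > 0" "\<And>s t. 0 < s \<Longrightarrow> s \<le> t \<Longrightarrow> t < d \<Longrightarrow> g t \<le> g s"
    by blast
  then show ?thesis
    by (intro that[OF antimono_tendsto_at_right_0[of d]]) auto
next
  case False
  have "g s \<le> g t" if "0 < s" "s < t" for s t
  proof -
    from False \<open>0 < s\<close> obtain x y where xy: "0 < x" "x < y" "y < s" "g x < g y"
      by (metis not_le order.order_iff_strict)
    have "0 < (g y - g x) / (y - x)" using xy by simp
    also have "\<dots> \<le> (g t - g s) / (t - s)"
      using convex_on_slope_mono[OF g xy(1,2), of t s] xy that by simp
    finally show ?thesis using that by (simp add: divide_simps)
  qed
  then have mono: "ereal (g s) \<le> ereal (g t)" if "0 < s" "s \<le> t" for s t
    using that by (cases "s = t") auto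
  show ?thesis
    by (rule that[OF mono_tendsto_at_right_0[of 1]]) (use mono in auto)
qed

lemma tendsto_f_at_zero:
  assumes "convex_on {0<..} f"
  shows "((\<lambda>t. ereal (f t)) \<longlongrightarrow> f_at_zero f) (at_right 0)"
proof -
  obtain L where L: "((\<lambda>t. ereal (f t)) \<longlongrightarrow> L) (at_right 0)"
    using convex_on_tendsto_at_right_0[OF assms] .
  then have "f_at_zero f = L"
    unfolding f_at_zero_def by (rule tendsto_Lim[OF trivial_limit_at_right_real])
  with L show ?thesis by simp
qed

lemma tendsto_fstar_zero:
  assumes "convex_on {0<..} f"
  shows "((\<lambda>t. ereal (fstar_real f t)) \<longlongrightarrow> fstar f 0) (at_right 0)"
proof -
  obtain L where L: "((\<lambda>t. ereal (fstar_real f t)) \<longlongrightarrow> L) (at_right 0)"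
    using convex_on_tendsto_at_right_0[OF convex_on_fstar_real[OF assms]] .
  then have "fstar f 0 = L"
    unfolding fstar_def fstar_real_def by (simp add: tendsto_Lim[OF trivial_limit_at_right_real])
  with L show ?thesis by simp
qed

lemma f_slope_inf_eq_fstar_zero:
  assumes "convex_on {0<..} f"
  shows "f_slope_inf f = fstar f 0"
proof -
  have "((\<lambda>u. ereal (fstar_real f (inverse u))) \<longlongrightarrow> fstar f 0) at_top"
    by (rule filterlim_compose[OF tendsto_fstar_zero[OF assms] filterlim_inverse_at_right_top])
  moreover have "eventually (\<lambda>u. ereal (fstar_real f (inverse u)) = ereal (f u / u)) at_top"
    using eventually_gt_at_top[of 0]
    by eventually_elim (simp add: fstar_real_def field_simps)
  ultimately have "((\<lambda>u. ereal (f u / u)) \<longlongrightarrow> fstar f 0) at_top"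
    by (rule Lim_transform_eventually)
  then show ?thesis
    unfolding f_slope_inf_def by (rule tendsto_Lim[OF trivial_limit_at_top_linorder])
qed

lemma affine_minorant_le_limit_at_right_0:
  fixes \<phi> :: "real \<Rightarrow> real"
  assumes L: "((\<lambda>t. ereal (\<phi> t)) \<longlongrightarrow> L) (at_right 0)"
    and minorant: "\<And>t. 0 < t \<Longrightarrow> A + B * t \<le> \<phi> t"
  shows "ereal A \<le> L"
proof (rule tendsto_le[OF trivial_limit_at_right_real L])
  have "((\<lambda>t. A + B * t) \<longlongrightarrow> A + B * 0) (at_right 0)"
    by (intro tendsto_intros)
  then show "((\<lambda>t. ereal (A + B * t)) \<longlongrightarrow> ereal A) (at_right 0)"
    by (intro tendsto_ereal) simp
  show "eventually (\<lambda>t. ereal (A + B * t) \<le> ereal (\<phi> t)) (at_right 0)"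
    using eventually_at_right_real[OF zero_less_one] by eventually_elim (simp add: minorant)
qed

lemma fstar_zero_ge_supporting_intercept:
  assumes "convex_on {0<..} f"
    and line: "\<And>y. 0 < y \<Longrightarrow> fstar_real f z + c * (y - z) \<le> fstar_real f y"
  shows "ereal (fstar_real f z - c * z) \<le> fstar f 0"
  by (rule affine_minorant_le_limit_at_right_0[OF tendsto_fstar_zero[OF assms(1)]])
    (use line in \<open>simp add: algebra_simps\<close>)

lemma f_at_zero_ge_supporting_slope:
  assumes "convex_on {0<..} f"
    and line: "\<And>y. 0 < y \<Longrightarrow> fstar_real f z + c * (y - z) \<le> fstar_real f y"
  shows "ereal c \<le> f_at_zero f"
proof (rule affine_minorant_le_limit_at_right_0[OF tendsto_f_at_zero[OF assms(1)]])
  fix t :: real assume "0 < t"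
  then have "t * (fstar_real f z + c * (1 / t - z)) \<le> t * fstar_real f (1 / t)"
    using line[of "1 / t"] by (simp add: mult_left_mono)
  with \<open>0 < t\<close> show "c + (fstar_real f z - c * z) * t \<le> f t"
    by (simp add: fstar_real_def algebra_simps)
qed

lemma fdiv_integrand_pos:
  "0 < P \<Longrightarrow> 0 < Q \<Longrightarrow> fdiv_integrand f P Q = ereal (P * fstar_real f (Q / P))"
  by (simp add: fdiv_integrand_def fstar_real_def)

lemma fdiv_integrand_ge_singular:
  assumes "convex_on {0<..} f" and "0 \<le> P" "0 \<le> Q" "\<not> (0 < P \<and> 0 < Q)"
    and A: "ereal A \<le> fstar f 0" and B: "ereal B \<le> f_at_zero f"
  shows "ereal (A * P + B * Q) \<le> fdiv_integrand f P Q"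
proof -
  consider "P = 0" "Q = 0" | "P = 0" "0 < Q" | "0 < P" "Q = 0"
    using assms(2-4) by force
  then show ?thesis
  proof cases
    case 2
    then have "ereal Q * ereal B \<le> ereal Q * f_at_zero f"
      using B by (intro ereal_mult_left_mono) auto
    with 2 show ?thesis by (simp add: fdiv_integrand_def mult.commute)
  next
    case 3
    then have "ereal P * ereal A \<le> ereal P * fstar f 0"
      using A by (intro ereal_mult_left_mono) auto
    with 3 show ?thesis
      by (simp add: fdiv_integrand_def f_slope_inf_eq_fstar_zero[OF assms(1)] mult.commute)
  qed (simp add: fdiv_integrand_def)
qed

lemma fdiv_integrand_ge_affine:
  assumes "convex_on {0<..} f" and "0 \<le> a"
    and minorant: "\<And>r. 0 < r \<Longrightarrow> A + B * r + C * min r a \<le> fstar_real f r"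
    and "ereal A \<le> fstar f 0" "ereal B \<le> f_at_zero f" and "0 \<le> P" "0 \<le> Q"
  shows "ereal (A * P + B * Q + C * min Q (a * P)) \<le> fdiv_integrand f P Q"
proof (cases "0 < P \<and> 0 < Q")
  case True
  then have "P * (A + B * (Q / P) + C * min (Q / P) a) \<le> P * fstar_real f (Q / P)"
    using minorant[of "Q / P"] by (intro mult_left_mono) auto
  moreover have "P * min (Q / P) a = min Q (a * P)"
    using True by (simp add: min_mult_distrib_left mult.commute)
  ultimately show ?thesis
    using True by (simp add: fdiv_integrand_pos algebra_simps)
next
  case False
  then have "min Q (a * P) = 0"
    using assms(2,6,7) by (auto simp: min_def)
  then show ?thesis
    using fdiv_integrand_ge_singular[OF assms(1,6,7) False assms(4,5)] by simp
qed

text \<open>The identity \<open>g (min r a) + g (max r a) = g r + g a\<close> lets two supporting lines, used at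
  \<open>min r a\<close> and \<open>max r a\<close>, combine into a single minorant of \<open>g\<close>.\<close>

lemma supporting_lines_min_max_minorant:
  fixes g :: "real \<Rightarrow> real"
  assumes line1: "\<And>y. 0 < y \<Longrightarrow> g m + c1 * (y - m) \<le> g y"
    and line2: "\<And>y. 0 < y \<Longrightarrow> g M + c2 * (y - M) \<le> g y"
    and "0 < a" "0 < r"
  shows "g m - c1 * m + g M + c2 * (a - M) - g a + c2 * r + (c1 - c2) * min r a \<le> g r"
proof -
  have "g m + c1 * (min r a - m) + (g M + c2 * (max r a - M)) \<le> g (min r a) + g (max r a)"
    using line1[of "min r a"] line2[of "max r a"] assms(3,4) by (simp add: add_mono)
  also have "\<dots> = g r + g a"
    by (cases "r \<le> a") (auto simp: min_def max_def)
  finally show ?thesis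
    by (cases "r \<le> a") (auto simp: min_def max_def algebra_simps)
qed

lemma prob_density_integrable:
  assumes "is_prob_density \<mu> p"
  shows "integrable \<mu> p" and "(\<integral>x. p x \<partial>\<mu>) = 1"
proof -
  have "(\<integral>\<^sup>+x. p x \<partial>\<mu>) = ennreal 1 \<longleftrightarrow> integrable \<mu> p \<and> integral\<^sup>L \<mu> p = 1"
    using assms unfolding is_prob_density_def by (intro nn_integral_eq_integrable) auto
  with assms show "integrable \<mu> p" "(\<integral>x. p x \<partial>\<mu>) = 1"
    unfolding is_prob_density_def by auto
qed

lemma integral_eq_nn_integral_diff:
  fixes h :: "'a \<Rightarrow> real"
  assumes "integrable M h"
  shows "ereal (\<integral>x. h x \<partial>M)
    = enn2ereal (\<integral>\<^sup>+x. ennreal (h x) \<partial>M) - enn2ereal (\<integral>\<^sup>+x. ennreal (- h x) \<partial>M)"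
proof -
  have fin: "(\<integral>\<^sup>+x. ennreal (h x) \<partial>M) < \<infinity>" "(\<integral>\<^sup>+x. ennreal (- h x) \<partial>M) < \<infinity>"
    using assms unfolding real_integrable_def by (auto simp: less_top)
  have enn2ereal_finite: "enn2ereal N = ereal (enn2real N)" if "N < \<infinity>" for N
  proof -
    have "enn2ereal N = enn2ereal (ennreal (enn2real N))"
      using that by simp
    then show ?thesis by simp
  qed
  show ?thesis
    unfolding real_lebesgue_integral_def[OF assms] enn2ereal_finite[OF fin(1)]
      enn2ereal_finite[OF fin(2)] by simp
qed

lemma e2ennreal_max_0: "e2ennreal (max 0 x) = e2ennreal x"
  by (cases "x \<le> 0") (auto simp: e2ennreal_neg max_def)

lemma integral_le_f_div:
  fixes h :: "'a \<Rightarrow> real"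
  assumes h: "integrable \<mu> h"
    and le: "AE x in \<mu>. ereal (h x) \<le> fdiv_integrand f (p x) (q x)"
  shows "ereal (\<integral>x. h x \<partial>\<mu>) \<le> f_div f \<mu> p q"
proof -
  have pos: "(\<integral>\<^sup>+x. ennreal (h x) \<partial>\<mu>)
      \<le> (\<integral>\<^sup>+x. e2ennreal (max 0 (fdiv_integrand f (p x) (q x))) \<partial>\<mu>)"
    using le by (intro nn_integral_mono_AE)
      (auto simp: e2ennreal_max_0 elim!: eventually_mono dest: e2ennreal_mono)
  have "AE x in \<mu>. e2ennreal (max 0 (- fdiv_integrand f (p x) (q x))) \<le> ennreal (- h x)"
    using le
  proof eventually_elim
    case (elim x)
    then have "- fdiv_integrand f (p x) (q x) \<le> ereal (- h x)"
      by (simp add: ereal_uminus_le_reorder)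
    from e2ennreal_mono[OF this] show ?case by (simp add: e2ennreal_max_0)
  qed
  then have neg: "(\<integral>\<^sup>+x. e2ennreal (max 0 (- fdiv_integrand f (p x) (q x))) \<partial>\<mu>)
      \<le> (\<integral>\<^sup>+x. ennreal (- h x) \<partial>\<mu>)"
    by (rule nn_integral_mono_AE)
  show ?thesis
    unfolding integral_eq_nn_integral_diff[OF h] f_div_def
    by (intro ereal_minus_mono) (use pos neg in \<open>auto simp: less_eq_ennreal.rep_eq\<close>)
qed

lemma f_div_eq_integral:
  fixes h :: "'a \<Rightarrow> real"
  assumes h: "integrable \<mu> h"
    and eq: "\<And>x. x \<in> space \<mu> \<Longrightarrow> fdiv_integrand f (p x) (q x) = ereal (h x)"
  shows "f_div f \<mu> p q = ereal (\<integral>x. h x \<partial>\<mu>)"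
proof -
  have "(\<integral>\<^sup>+x. e2ennreal (max 0 (fdiv_integrand f (p x) (q x))) \<partial>\<mu>) = (\<integral>\<^sup>+x. ennreal (h x) \<partial>\<mu>)"
    "(\<integral>\<^sup>+x. e2ennreal (max 0 (- fdiv_integrand f (p x) (q x))) \<partial>\<mu>) = (\<integral>\<^sup>+x. ennreal (- h x) \<partial>\<mu>)"
    by (simp_all add: eq e2ennreal_max_0 cong: nn_integral_cong)
  then show ?thesis
    unfolding integral_eq_nn_integral_diff[OF h] f_div_def by simp
qed

lemma f_at_zero_phi_DG:
  assumes "0 < w" "w < 1"
  shows "f_at_zero (phi_DG w) = ereal (min w (1 - w))"
proof -
  have "((\<lambda>t. min w (1 - w) - min (w * t) (1 - w))
      \<longlongrightarrow> min w (1 - w) - min (w * 0) (1 - w)) (at_right 0)"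
    by (intro tendsto_intros)
  then have "((\<lambda>t. ereal (phi_DG w t)) \<longlongrightarrow> ereal (min w (1 - w))) (at_right 0)"
    using assms by (intro tendsto_ereal) (simp add: phi_DG_def)
  then show ?thesis
    unfolding f_at_zero_def by (rule tendsto_Lim[OF trivial_limit_at_right_real])
qed

lemma f_slope_inf_phi_DG:
  assumes "0 < w" "w < 1"
  shows "f_slope_inf (phi_DG w) = 0"
proof -
  define c where "c = min w (1 - w) - (1 - w)"
  have "((\<lambda>u. c * inverse u) \<longlongrightarrow> c * 0) at_top"
    by (intro tendsto_intros tendsto_inverse_0_at_top filterlim_ident)
  moreover have "eventually (\<lambda>u. c * inverse u = phi_DG w u / u) at_top"
    using eventually_ge_at_top[of "(1 - w) / w"]
  proof eventually_elim
    case (elim u)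
    then have "1 - w \<le> w * u" using assms by (simp add: field_simps)
    then show ?case by (simp add: phi_DG_def c_def divide_inverse min_def)
  qed
  ultimately have "((\<lambda>u. ereal (phi_DG w u / u)) \<longlongrightarrow> ereal 0) at_top"
    by (intro tendsto_ereal) (simp add: Lim_transform_eventually)
  then show ?thesis
    unfolding f_slope_inf_def zero_ereal_def by (rule tendsto_Lim[OF trivial_limit_at_top_linorder])
qed

lemma fdiv_integrand_phi_DG:
  assumes "0 < w" "w < 1" "0 \<le> P" "0 \<le> Q"
  shows "fdiv_integrand (phi_DG w) P Q = ereal (min w (1 - w) * Q - min (w * P) ((1 - w) * Q))"
proof -
  consider "0 < P" "0 < Q" | "P = 0" "0 < Q" | "Q = 0"
    using assms(3,4) by force
  then show ?thesis
  proof cases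
    case 1
    then have "Q * min (w * (P / Q)) (1 - w) = min (w * P) ((1 - w) * Q)"
      by (simp add: min_mult_distrib_left algebra_simps)
    then show ?thesis
      using 1 by (simp add: fdiv_integrand_def phi_DG_def algebra_simps)
  qed (use assms in \<open>auto simp: fdiv_integrand_def f_at_zero_phi_DG f_slope_inf_phi_DG
    min_def mult_le_0_iff\<close>)
qed

lemma DeGroot_info_eq_overlap:
  assumes "0 < w" "w < 1" and P: "is_prob_density \<mu> p" and Q: "is_prob_density \<mu> q"
  shows "DeGroot_info w \<mu> p q = min w (1 - w) - (\<integral>x. min (w * p x) ((1 - w) * q x) \<partial>\<mu>)"
proof -
  note p = prob_density_integrable[OF P] and q = prob_density_integrable[OF Q]
  have "f_div (phi_DG w) \<mu> p q
      = ereal (\<integral>x. min w (1 - w) * q x - min (w * p x) ((1 - w) * q x) \<partial>\<mu>)"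
    using p(1) q(1) P Q assms(1,2)
    by (intro f_div_eq_integral) (auto simp: fdiv_integrand_phi_DG is_prob_density_def)
  also have "\<dots> = ereal (min w (1 - w) - (\<integral>x. min (w * p x) ((1 - w) * q x) \<partial>\<mu>))"
    using p q by (simp add: integral_diff)
  finally show ?thesis by (simp add: DeGroot_info_def)
qed

lemma f_div_ge_fstar_overlap_pos:
  assumes cf: "convex_on {0<..} f" and P: "is_prob_density \<mu> p" and Q: "is_prob_density \<mu> q"
    and "0 < a" and m: "m = (\<integral>x. min (q x) (a * p x) \<partial>\<mu>)" and "0 < m"
  shows "fstar f (1 + a - m) + fstar f m - fstar f a \<le> f_div f \<mu> p q"
proof -
  let ?g = "fstar_real f"
  note p = prob_density_integrable[OF P] and q = prob_density_integrable[OF Q]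
  have nonneg: "AE x in \<mu>. 0 \<le> p x \<and> 0 \<le> q x"
    using P Q by (auto simp: is_prob_density_def)
  have "m \<le> 1"
    unfolding m q(2)[symmetric] using p(1) q(1) by (intro integral_mono) auto
  define M where "M = 1 + a - m"
  have "0 < M" using \<open>m \<le> 1\<close> \<open>0 < a\<close> by (simp add: M_def)
  obtain c1 where line1: "\<And>y. 0 < y \<Longrightarrow> ?g m + c1 * (y - m) \<le> ?g y"
    using convex_on_supporting_line[OF convex_on_fstar_real[OF cf] \<open>0 < m\<close>] by blast
  obtain c2 where line2: "\<And>y. 0 < y \<Longrightarrow> ?g M + c2 * (y - M) \<le> ?g y"
    using convex_on_supporting_line[OF convex_on_fstar_real[OF cf] \<open>0 < M\<close>] by blast
  define A where "A = ?g m - c1 * m + ?g M + c2 * (a - M) - ?g a"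
  have "ereal A \<le> ereal (?g m - c1 * m)"
    using line2[OF \<open>0 < a\<close>] by (simp add: A_def)
  also have "\<dots> \<le> fstar f 0"
    by (rule fstar_zero_ge_supporting_intercept[OF cf line1])
  finally have A_le: "ereal A \<le> fstar f 0" .
  have minorant: "A + c2 * r + (c1 - c2) * min r a \<le> ?g r" if "0 < r" for r
    using supporting_lines_min_max_minorant[OF line1 line2 \<open>0 < a\<close> that] by (simp add: A_def)
  have "AE x in \<mu>. ereal (A * p x + c2 * q x + (c1 - c2) * min (q x) (a * p x))
      \<le> fdiv_integrand f (p x) (q x)"
    using nonneg by eventually_elim (use \<open>0 < a\<close> in \<open>auto intro!: fdiv_integrand_ge_affine[OF cf _ minorant
      A_le f_at_zero_ge_supporting_slope[OF cf line2]]\<close>)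
  then have "ereal (\<integral>x. A * p x + c2 * q x + (c1 - c2) * min (q x) (a * p x) \<partial>\<mu>) \<le> f_div f \<mu> p q"
    using p(1) q(1) by (intro integral_le_f_div) auto
  moreover have "(\<integral>x. A * p x + c2 * q x + (c1 - c2) * min (q x) (a * p x) \<partial>\<mu>) = A + c2 + (c1 - c2) * m"
    using p q by (simp add: m)
  moreover have "A + c2 + (c1 - c2) * m = ?g M + ?g m - ?g a"
    by (simp add: A_def M_def algebra_simps)
  ultimately have "ereal (?g M + ?g m - ?g a) \<le> f_div f \<mu> p q"
    by simp
  then show ?thesis
    using \<open>0 < a\<close> \<open>0 < m\<close> \<open>0 < M\<close> by (simp add: fstar_eq_fstar_real M_def[symmetric])
qed

lemma ereal_add_le_of_real_lower:
  fixes x y :: ereal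
  assumes "\<And>K. ereal K \<le> x \<Longrightarrow> ereal (c + K) \<le> y"
  shows "ereal c + x \<le> y"
proof (cases x)
  case PInf
  have "y = \<infinity>"
  proof (rule ereal_top)
    fix B
    show "ereal B \<le> y"
      using assms[of "B - c"] PInf by simp
  qed
  then show ?thesis by simp
qed (use assms in auto)

lemma f_div_ge_fstar_overlap_zero:
  assumes cf: "convex_on {0<..} f" and P: "is_prob_density \<mu> p" and Q: "is_prob_density \<mu> q"
    and "0 < a" and overlap: "(\<integral>x. min (q x) (a * p x) \<partial>\<mu>) = 0"
  shows "fstar f (1 + a) + fstar f 0 - fstar f a \<le> f_div f \<mu> p q"
proof -
  let ?g = "fstar_real f"
  note p = prob_density_integrable[OF P] and q = prob_density_integrable[OF Q]
  have nonneg: "AE x in \<mu>. 0 \<le> p x \<and> 0 \<le> q x"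
    using P Q by (auto simp: is_prob_density_def)
  obtain c where line: "\<And>y. 0 < y \<Longrightarrow> ?g (1 + a) + c * (y - (1 + a)) \<le> ?g y"
    using convex_on_supporting_line[OF convex_on_fstar_real[OF cf], of "1 + a"] \<open>0 < a\<close> by auto
  have "AE x in \<mu>. min (q x) (a * p x) = 0"
    using overlap p(1) q(1) nonneg \<open>0 < a\<close>
    by (subst integral_nonneg_eq_0_iff_AE[symmetric]) (auto elim!: eventually_mono)
  then have singular: "AE x in \<mu>. 0 \<le> p x \<and> 0 \<le> q x \<and> \<not> (0 < p x \<and> 0 < q x)"
    using nonneg by eventually_elim (use \<open>0 < a\<close> in \<open>auto simp: min_def split: if_splits\<close>)
  have lower: "ereal (K + c) \<le> f_div f \<mu> p q" if "ereal K \<le> fstar f 0" for K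
  proof -
    have "AE x in \<mu>. ereal (K * p x + c * q x) \<le> fdiv_integrand f (p x) (q x)"
      using singular by eventually_elim (use that f_at_zero_ge_supporting_slope[OF cf line] in
        \<open>auto intro!: fdiv_integrand_ge_singular[OF cf]\<close>)
    then have "ereal (\<integral>x. K * p x + c * q x \<partial>\<mu>) \<le> f_div f \<mu> p q"
      using p(1) q(1) by (intro integral_le_f_div) auto
    then show ?thesis using p q by simp
  qed
  have "ereal c + fstar f 0 \<le> f_div f \<mu> p q"
    by (rule ereal_add_le_of_real_lower) (use lower in \<open>simp add: add.commute\<close>)
  moreover have "ereal (?g (1 + a)) + fstar f 0 - ereal (?g a) \<le> ereal c + fstar f 0"
    using line[of a] \<open>0 < a\<close> by (cases "fstar f 0") auto
  ultimately show ?thesis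
    using \<open>0 < a\<close> by (simp add: fstar_eq_fstar_real)
qed

lemma f_div_ge_fstar_overlap:
  assumes cf: "convex_on {0<..} f" and P: "is_prob_density \<mu> p" and Q: "is_prob_density \<mu> q"
    and "0 < a"
  defines "m \<equiv> \<integral>x. min (q x) (a * p x) \<partial>\<mu>"
  shows "fstar f (1 + a - m) + fstar f m - fstar f a \<le> f_div f \<mu> p q"
proof -
  have "0 \<le> m"
    unfolding m_def using P Q \<open>0 < a\<close>
    by (intro integral_nonneg_AE AE_I2) (auto simp: is_prob_density_def)
  then consider "0 < m" | "m = 0" by linarith
  then show ?thesis
  proof cases
    case 1
    then show ?thesis
      using f_div_ge_fstar_overlap_pos[OF assms(1-4) m_def[THEN meta_eq_to_obj_eq]] by simp
  next
    case 2
    then show ?thesis using f_div_ge_fstar_overlap_zero[OF assms(1-4)] m_def by simp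
  qed
qed

lemma f_div_ge_fstar_weighted_overlap:
  assumes "convex_on {0<..} f" and "is_prob_density \<mu> p" "is_prob_density \<mu> q"
    and "0 < \<alpha>" "0 < \<beta>" and overlap: "(\<integral>x. min (\<alpha> * p x) (\<beta> * q x) \<partial>\<mu>) = \<alpha> - I"
  shows "fstar f (1 + I / \<beta>) + fstar f ((\<alpha> - I) / \<beta>) - fstar f (\<alpha> / \<beta>) \<le> f_div f \<mu> p q"
proof -
  have "(\<integral>x. min (q x) (\<alpha> / \<beta> * p x) \<partial>\<mu>) = (\<integral>x. min (\<alpha> * p x) (\<beta> * q x) / \<beta> \<partial>\<mu>)"
    using \<open>0 < \<beta>\<close> by (intro Bochner_Integration.integral_cong)
      (auto simp: min_divide_distrib_right min.commute)
  also have "\<dots> = (\<alpha> - I) / \<beta>"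
    by (simp add: overlap)
  finally have m: "(\<integral>x. min (q x) (\<alpha> / \<beta> * p x) \<partial>\<mu>) = (\<alpha> - I) / \<beta>" .
  have M: "1 + \<alpha> / \<beta> - (\<alpha> - I) / \<beta> = 1 + I / \<beta>"
    by (simp add: diff_divide_distrib)
  show ?thesis
    using f_div_ge_fstar_overlap[OF assms(1-3) divide_pos_pos[OF assms(4,5)]] unfolding m M .
qed

theorem corollary4:
  fixes f :: "real \<Rightarrow> real" and \<mu> :: "'a measure" and p q :: "'a \<Rightarrow> real" and w :: real
  assumes "convex_on {0<..} f" and "f 1 = 0"
    and "is_prob_density \<mu> p" and "is_prob_density \<mu> q"
  shows "(0 < w \<and> w \<le> 1/2 \<longrightarrow>
            f_div f \<mu> p q \<ge>
              fstar f (1 + DeGroot_info w \<mu> p q / (1 - w))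
            + fstar f ((w - DeGroot_info w \<mu> p q) / (1 - w))
            - fstar f (w / (1 - w)))
       \<and> (1/2 < w \<and> w < 1 \<longrightarrow>
            f_div f \<mu> p q \<ge>
              fstar f (1 + DeGroot_info w \<mu> q p / w)
            + fstar f ((1 - w - DeGroot_info w \<mu> q p) / w)
            - fstar f ((1 - w) / w))"
proof -
  have "(\<integral>x. min (w * p x) ((1 - w) * q x) \<partial>\<mu>) = w - DeGroot_info w \<mu> p q"
    if "0 < w" "w \<le> 1/2"
    using DeGroot_info_eq_overlap[OF _ _ assms(3,4), of w] that by (simp add: min_def)
  moreover have "(\<integral>x. min ((1 - w) * p x) (w * q x) \<partial>\<mu>) = (1 - w) - DeGroot_info w \<mu> q p"
    if "1/2 < w" "w < 1"
    using DeGroot_info_eq_overlap[OF _ _ assms(4,3), of w] that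
    by (simp add: min_absorb2 min.commute)
  ultimately show ?thesis
    by (auto intro!: f_div_ge_fstar_weighted_overlap[OF assms(1,3,4)])
qed

end
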